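(* Let $G$ be a simple cubic graph on vertex set $[n]$ with girth at least $16$, let $A$ be a MAI set of $G$, $B=V(G)\setminus A$, and let $Y$ (resp. $Z$) be the set of vertices of degree $1$ in $G[A]$ (resp. $G[B]$). Let $J$ be the set of edges of $G$ with one end in $Y$ and the other in $Z$ (under these hypotheses $J$ is a matching). Let $H=H(A)$ be the graph with vertex set $J$ in which two distinct elements $yz, y'z'\in J$ ($y,y'\in Y$, $z,z'\in Z$) are adjacent if $yy'\in E(G)$ or $zz'\in E(G)$. Then $G$ has at least $I(H)$ distinct MAI sets.
   Context: A vertex set $A$ of a graph $G$ is an AI set (almost independent set) if $\Delta(G[A])\le 1$, i.e. every component of the induced subgraph $G[A]$ is a single vertex or a single edge. A vertex set $A$ is a MAI set (maximum almost independent set) of $G$ if (M1) $A$ is an AI set, (M2) $A$ contains an independent set of size $\alpha(G)$, and (M3) $A$ has maximum cardinality among all vertex sets satisfying (M1) and (M2). For a graph $H$, $I(H)$ denotes the total number of independent sets of $H$, including the empty set. *)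

theory Defs
  imports Main
begin

definition simple_graph :: "'a set \<Rightarrow> ('a \<Rightarrow> 'a \<Rightarrow> bool) \<Rightarrow> bool" where
  "simple_graph V E \<longleftrightarrow> finite V \<and> (\<forall>x y. E x y \<longrightarrow> x \<in> V \<and> y \<in> V) \<and>
     (\<forall>x y. E x y \<longrightarrow> E y x) \<and> (\<forall>x. \<not> E x x)"

definition cubic :: "'a set \<Rightarrow> ('a \<Rightarrow> 'a \<Rightarrow> bool) \<Rightarrow> bool" where
  "cubic V E \<longleftrightarrow> (\<forall>v\<in>V. card {u\<in>V. E v u} = 3)"

definition is_cycle :: "'a set \<Rightarrow> ('a \<Rightarrow> 'a \<Rightarrow> bool) \<Rightarrow> 'a list \<Rightarrow> bool" where
  "is_cycle V E cs \<longleftrightarrow> length cs \<ge> 3 \<and> distinct cs \<and> set cs \<subseteq> V \<and>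
     (\<forall>i < length cs. E (cs ! i) (cs ! ((i + 1) mod length cs)))"

definition girth_at_least :: "'a set \<Rightarrow> ('a \<Rightarrow> 'a \<Rightarrow> bool) \<Rightarrow> nat \<Rightarrow> bool" where
  "girth_at_least V E g \<longleftrightarrow> (\<forall>cs. is_cycle V E cs \<longrightarrow> length cs \<ge> g)"

definition independent :: "'a set \<Rightarrow> ('a \<Rightarrow> 'a \<Rightarrow> bool) \<Rightarrow> 'a set \<Rightarrow> bool" where
  "independent V E S \<longleftrightarrow> S \<subseteq> V \<and> (\<forall>x\<in>S. \<forall>y\<in>S. \<not> E x y)"

definition alpha :: "'a set \<Rightarrow> ('a \<Rightarrow> 'a \<Rightarrow> bool) \<Rightarrow> nat" where
  "alpha V E = Max {card S | S. independent V E S}"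

definition deg_in :: "('a \<Rightarrow> 'a \<Rightarrow> bool) \<Rightarrow> 'a set \<Rightarrow> 'a \<Rightarrow> nat" where
  "deg_in E S v = card {u\<in>S. E v u}"

definition AI_set :: "'a set \<Rightarrow> ('a \<Rightarrow> 'a \<Rightarrow> bool) \<Rightarrow> 'a set \<Rightarrow> bool" where
  "AI_set V E A \<longleftrightarrow> A \<subseteq> V \<and> (\<forall>v\<in>A. deg_in E A v \<le> 1)"

definition AI_alpha :: "'a set \<Rightarrow> ('a \<Rightarrow> 'a \<Rightarrow> bool) \<Rightarrow> 'a set \<Rightarrow> bool" where
  "AI_alpha V E A \<longleftrightarrow> AI_set V E A \<and>
     (\<exists>S. S \<subseteq> A \<and> independent V E S \<and> card S = alpha V E)"

definition MAI_set :: "'a set \<Rightarrow> ('a \<Rightarrow> 'a \<Rightarrow> bool) \<Rightarrow> 'a set \<Rightarrow> bool" where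
  "MAI_set V E A \<longleftrightarrow> AI_alpha V E A \<and>
     (\<forall>A'. AI_alpha V E A' \<longrightarrow> card A' \<le> card A)"

definition num_indep :: "'b set \<Rightarrow> ('b \<Rightarrow> 'b \<Rightarrow> bool) \<Rightarrow> nat" where
  "num_indep W R = card {S. independent W R S}"

definition Yset :: "('a \<Rightarrow> 'a \<Rightarrow> bool) \<Rightarrow> 'a set \<Rightarrow> 'a set" where
  "Yset E A = {v\<in>A. deg_in E A v = 1}"

definition Jset :: "'a set \<Rightarrow> ('a \<Rightarrow> 'a \<Rightarrow> bool) \<Rightarrow> 'a set \<Rightarrow> ('a \<times> 'a) set" where
  "Jset V E A = {(y, z). y \<in> Yset E A \<and> z \<in> Yset E (V - A) \<and> E y z}"

definition H_adj :: "('a \<Rightarrow> 'a \<Rightarrow> bool) \<Rightarrow> 'a \<times> 'a \<Rightarrow> 'a \<times> 'a \<Rightarrow> bool" where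
  "H_adj E p q \<longleftrightarrow> p \<noteq> q \<and> (E (fst p) (fst q) \<or> E (snd p) (snd q))"

end

theory Submission
  imports Defs
begin

text \<open>For an independent set S of H, trading the Y-ends of the edges in S for their Z-ends
turns A into another MAI set, from which S is recovered as its part outside A. The key fact is
that every maximum independent set inside A can be moved off any independent T \<subseteq> Y by
replacing each vertex of T by its unique neighbour in A. Since a vertex of Z has at most two
neighbours in A, it can then only be dominated by them; this makes J a matching and keeps the
degree of the new set at most one. The girth condition is only used to exclude triangles.\<close>

lemma independent_card_le_alpha:
  assumes "finite V" "independent V E S"
  shows "card S \<le> alpha V E"
proof -
  have "{card S | S. independent V E S} \<subseteq> card ` Pow V"
    by (auto simp: independent_def)
  then have "finite {card S | S. independent V E S}"
    using assms(1) finite_subset by blast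
  then show ?thesis
    unfolding alpha_def using assms(2) by (intro Max_ge) auto
qed

lemma maximum_independent_dominates:
  assumes "simple_graph V E" "independent V E I" "card I = alpha V E" "v \<in> V - I"
  shows "\<exists>u\<in>I. E v u"
proof (rule ccontr)
  assume "\<not> ?thesis"
  with assms have "independent V E (insert v I)"
    by (auto simp: independent_def simple_graph_def)
  then have "card (insert v I) \<le> alpha V E"
    using assms(1) by (intro independent_card_le_alpha) (simp_all add: simple_graph_def)
  moreover have "finite I"
    using assms(1,2) finite_subset by (auto simp: independent_def simple_graph_def)
  ultimately show False
    using assms(3,4) by simp
qed

lemma girth_at_least_triangle_free:
  assumes "simple_graph V E" "girth_at_least V E g" "3 < g" "E a b" "E b c" "E c a"
  shows False
proof -
  have "is_cycle V E [a, b, c]"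
    unfolding is_cycle_def
  proof (intro conjI allI impI)
    show "distinct [a, b, c]" "set [a, b, c] \<subseteq> V"
      using assms(1,4-6) by (auto simp: simple_graph_def)
  next
    fix i assume "i < length [a, b, c]"
    then have "i = 0 \<or> i = 1 \<or> i = 2" by auto
    then show "E ([a, b, c] ! i) ([a, b, c] ! ((i + 1) mod length [a, b, c]))"
      using assms(4-6) by auto
  qed simp
  then show False
    using assms(2,3) by (fastforce simp: girth_at_least_def)
qed

lemma finite_MAI_sets: "finite V \<Longrightarrow> finite {A. MAI_set V E A}"
  by (rule finite_subset[of _ "Pow V"]) (auto simp: MAI_set_def AI_alpha_def AI_set_def)

locale subcubic_triangle_free_MAI =
  fixes V :: "'a set" and E :: "'a \<Rightarrow> 'a \<Rightarrow> bool" and A :: "'a set"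
  assumes simple: "simple_graph V E"
    and max_degree: "\<And>v. v \<in> V \<Longrightarrow> card {u\<in>V. E v u} \<le> 3"
    and triangle_free: "\<And>a b c. E a b \<Longrightarrow> E b c \<Longrightarrow> E c a \<Longrightarrow> False"
    and MAI: "MAI_set V E A"
begin

abbreviation "Y \<equiv> Yset E A"
abbreviation "Z \<equiv> Yset E (V - A)"
abbreviation "J \<equiv> Jset V E A"

lemma finite_V: "finite V"
  using simple by (simp add: simple_graph_def)

lemma E_sym: "E x y \<Longrightarrow> E y x"
  using simple by (simp add: simple_graph_def)

lemma E_in_V: "E x y \<Longrightarrow> x \<in> V \<and> y \<in> V"
  using simple by (simp add: simple_graph_def)

lemma E_irrefl: "\<not> E x x"
  using simple by (simp add: simple_graph_def)

lemma A_subset_V: "A \<subseteq> V"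
  using MAI by (simp add: MAI_set_def AI_alpha_def AI_set_def)

lemma finite_A: "finite A"
  using A_subset_V finite_V finite_subset by blast

lemma Y_subset_A: "Y \<subseteq> A"
  by (auto simp: Yset_def)

lemma Z_subset: "Z \<subseteq> V - A"
  by (auto simp: Yset_def)

lemma A_neighbour_unique:
  assumes "v \<in> A" "u \<in> A" "w \<in> A" "E v u" "E v w"
  shows "u = w"
proof -
  have "card {x\<in>A. E v x} \<le> Suc 0"
    using MAI assms(1) by (simp add: MAI_set_def AI_alpha_def AI_set_def deg_in_def)
  then show ?thesis
    using assms finite_A by (subst (asm) card_le_Suc0_iff_eq) auto
qed

lemma Y_if_A_neighbour:
  assumes "v \<in> A" "u \<in> A" "E v u"
  shows "v \<in> Y"
proof -
  have "card {x\<in>A. E v x} \<noteq> 0"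
    using assms finite_A by auto
  moreover have "card {x\<in>A. E v x} \<le> 1"
    using MAI assms(1) by (simp add: MAI_set_def AI_alpha_def AI_set_def deg_in_def)
  ultimately show ?thesis
    using assms(1) by (simp add: Yset_def deg_in_def)
qed

definition partner :: "'a \<Rightarrow> 'a" where
  "partner y = (THE u. u \<in> A \<and> E y u)"

lemma partner:
  assumes "y \<in> Y"
  shows "partner y \<in> A" "E y (partner y)"
proof -
  have "card {u\<in>A. E y u} = 1"
    using assms by (simp add: Yset_def deg_in_def)
  then obtain u where u: "{u\<in>A. E y u} = {u}"
    by (rule card_1_singletonE)
  then have "partner y = u"
    unfolding partner_def by auto
  then show "partner y \<in> A" "E y (partner y)"
    using u by auto
qed

lemma partner_neighbour_unique:
  assumes "y \<in> Y" "u \<in> A" "E (partner y) u"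
  shows "u = y"
  using A_neighbour_unique[of "partner y" u y] assms partner[OF assms(1)] Y_subset_A E_sym
  by blast

lemma inj_on_partner: "inj_on partner Y"
proof (rule inj_onI)
  fix x y assume xy: "x \<in> Y" "y \<in> Y" "partner x = partner y"
  then have "E (partner x) y"
    using partner(2)[of y] E_sym by auto
  then show "x = y"
    using partner_neighbour_unique[of x y] xy Y_subset_A by auto
qed

lemma Z_no_three_A_neighbours:
  assumes "z \<in> Z" "{u1, u2, u3} \<subseteq> {u\<in>A. E z u}" "distinct [u1, u2, u3]"
  shows False
proof -
  have z: "z \<in> V" "z \<notin> A"
    using assms(1) Z_subset by auto
  have "{u\<in>V. E z u} = {u\<in>A. E z u} \<union> {u\<in>V - A. E z u}"
    using A_subset_V by auto
  also have "card \<dots> = card {u\<in>A. E z u} + card {u\<in>V - A. E z u}"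
    using finite_A finite_V by (intro card_Un_disjoint) auto
  also have "card {u\<in>V - A. E z u} = 1"
    using assms(1) by (simp add: Yset_def deg_in_def)
  finally have "card {u\<in>A. E z u} + 1 \<le> 3"
    using max_degree[OF z(1)] by simp
  moreover have "3 \<le> card {u\<in>A. E z u}"
    using card_mono[OF _ assms(2)] assms(3) finite_A by simp
  ultimately show False
    by simp
qed

lemma maximum_independent_avoiding:
  assumes T: "T \<subseteq> Y" "\<forall>x\<in>T. \<forall>y\<in>T. \<not> E x y"
  shows "\<exists>I. I \<subseteq> A - T \<and> independent V E I \<and> card I = alpha V E"
proof -
  obtain I where I: "I \<subseteq> A" "independent V E I" "card I = alpha V E"
    using MAI by (auto simp: MAI_set_def AI_alpha_def)
  have I_nonadj: "\<not> E x y" if "x \<in> I" "y \<in> I" for x y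
    using I(2) that by (simp add: independent_def)
  have pT: "partner t \<in> A" "E t (partner t)" if "t \<in> T" for t
    using partner T(1) that by auto
  let ?I' = "(I - T) \<union> partner ` (I \<inter> T)"
  have sub: "?I' \<subseteq> A - T"
    using I(1) pT T(2) by blast
  have fixed_moved: "\<not> E x (partner t)" "\<not> E (partner t) x" if "x \<in> I - T" "t \<in> I \<inter> T" for x t
    using partner_neighbour_unique[of t x] E_sym T(1) I(1) that by blast+
  have moved_moved: "\<not> E (partner s) (partner t)" if "s \<in> I \<inter> T" "t \<in> I \<inter> T" for s t
  proof
    assume "E (partner s) (partner t)"
    then have "partner t = s"
      using partner_neighbour_unique[of s "partner t"] pT T(1) that by blast
    then show False
      using I_nonadj[of t s] pT(2)[of t] that by auto
  qed
  have "\<not> E x y" if "x \<in> ?I'" "y \<in> ?I'" for x y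
    using that I_nonadj fixed_moved moved_moved by blast
  then have ind: "independent V E ?I'"
    using sub A_subset_V unfolding independent_def by blast
  have card_eq: "card ?I' = card I"
  proof -
    have "(I - T) \<inter> partner ` (I \<inter> T) = {}"
      using I_nonadj pT(2) by blast
    then have "card ?I' = card (I - T) + card (partner ` (I \<inter> T))"
      using finite_subset[OF I(1) finite_A] by (intro card_Un_disjoint) auto
    also have "card (partner ` (I \<inter> T)) = card (I \<inter> T)"
      using inj_on_partner T(1) by (intro card_image) (auto intro: inj_on_subset)
    also have "card (I - T) + card (I \<inter> T) = card I"
      using finite_subset[OF I(1) finite_A] by (metis add.commute card_Int_Diff)
    finally show ?thesis .
  qed
  have "?I' \<subseteq> A - T \<and> independent V E ?I' \<and> card ?I' = alpha V E"
    using sub ind card_eq I(3) by simp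
  then show ?thesis
    by (rule exI)
qed

lemma Jset_snd_unique:
  assumes "(y, z) \<in> J" "(y', z) \<in> J"
  shows "y = y'"
proof (rule ccontr)
  assume ne: "y \<noteq> y'"
  have J: "y \<in> Y" "y' \<in> Y" "z \<in> Z" "E y z" "E y' z"
    using assms by (auto simp: Jset_def)
  have "\<not> E y y'"
    using triangle_free[of y y' z] J E_sym by blast
  then obtain I where I: "I \<subseteq> A - {y, y'}" "independent V E I" "card I = alpha V E"
    using maximum_independent_avoiding[of "{y, y'}"] J E_irrefl E_sym by auto
  then obtain u where u: "u \<in> I" "E z u"
    using maximum_independent_dominates[OF simple I(2,3)] J(3) Z_subset by blast
  show False
    using Z_no_three_A_neighbours[OF J(3), of y y' u] J u I Y_subset_A E_sym ne by auto
qed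

lemma inj_on_snd_Jset: "inj_on snd J"
  using Jset_snd_unique by (intro inj_onI) (metis prod.collapse)

lemma H_independentD:
  assumes "independent J (H_adj E) S" "p \<in> S" "q \<in> S"
  shows "\<not> E (fst p) (fst q)" "\<not> E (snd p) (snd q)"
  using assms E_irrefl by (cases "p = q"; auto simp: independent_def H_adj_def)+

text \<open>A vertex of A without neighbours in A lies in every maximum independent set avoiding
the Y-ends; two of its Z-neighbours could then replace it.\<close>

lemma lonely_vertex_sees_one_Z_end:
  assumes S: "independent J (H_adj E) S" "(y1, z1) \<in> S" "(y2, z2) \<in> S"
    and a: "a \<in> A" "\<forall>u\<in>A. \<not> E a u" "E a z1" "E a z2"
  shows "z1 = z2"
proof (rule ccontr)
  assume ne: "z1 \<noteq> z2"
  have "S \<subseteq> J"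
    using S(1) by (simp add: independent_def)
  then have J: "y1 \<in> Y" "z1 \<in> Z" "E y1 z1" "y2 \<in> Y" "z2 \<in> Z" "E y2 z2"
    using S(2,3) by (auto simp: Jset_def)
  have nonadj: "\<not> E y1 y2" "\<not> E z1 z2"
    using H_independentD[OF S(1)] S(2,3) by force+
  then obtain I where I: "I \<subseteq> A - {y1, y2}" "independent V E I" "card I = alpha V E"
    using maximum_independent_avoiding[of "{y1, y2}"] J E_irrefl E_sym by auto
  have "a \<in> I"
    using maximum_independent_dominates[OF simple I(2,3), of a] a A_subset_V I(1) by blast
  have finite_I: "finite I"
    using I(1) finite_A finite_subset by blast
  have z_outside: "z1 \<in> V - I" "z2 \<in> V - I"
    using J Z_subset I(1) by auto
  have z_nonadj: "\<not> E z u \<and> \<not> E u z" if "(y, z) \<in> {(y1, z1), (y2, z2)}" "u \<in> I - {a}" for y z u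
  proof -
    have "y \<in> A - I" "E z y" "z \<in> Z"
      using that(1) J I(1) Y_subset_A E_sym by auto
    moreover have "u \<in> A" "E z a"
      using that I(1) a E_sym by auto
    ultimately show ?thesis
      using Z_no_three_A_neighbours[of z y a u] that(2) \<open>a \<in> I\<close> a(1) E_sym by auto
  qed
  let ?K = "insert z1 (insert z2 (I - {a}))"
  have "\<not> E x y" if "x \<in> ?K" "y \<in> ?K" for x y
    using that I(2) z_nonadj[of y1 z1] z_nonadj[of y2 z2] nonadj(2) E_sym[of z2 z1] E_irrefl
    unfolding independent_def by blast
  then have "independent V E ?K"
    using I(2) z_outside unfolding independent_def by blast
  then have "card ?K \<le> alpha V E"
    using independent_card_le_alpha finite_V by blast
  moreover have "card ?K = card I + 1"
    using finite_I \<open>a \<in> I\<close> z_outside ne card_gt_0_iff[of I] by (auto simp: card_insert_if)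
  ultimately show False
    using I(3) by simp
qed

definition switch :: "('a \<times> 'a) set \<Rightarrow> 'a set" where
  "switch S = (A - fst ` S) \<union> snd ` S"

lemma switch_neighbour_unique:
  assumes S: "independent J (H_adj E) S"
    and in_switch: "v \<in> switch S" "u \<in> switch S" "w \<in> switch S"
    and adj: "E v u" "E v w"
  shows "u = w"
proof -
  have SJ: "S \<subseteq> J"
    using S by (simp add: independent_def)
  show ?thesis
  proof (cases "v \<in> snd ` S")
    case True
    then obtain y where yv: "(y, v) \<in> S"
      by force
    then have J: "y \<in> Y" "v \<in> Z" "E y v"
      using SJ by (auto simp: Jset_def)
    have other: "x \<in> A \<and> x \<noteq> y" if "x \<in> switch S" "E v x" for x
      using that yv H_independentD(2)[OF S yv] unfolding switch_def by force
    show ?thesis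
      using Z_no_three_A_neighbours[OF J(2), of y u w] other in_switch(2,3) adj J
        Y_subset_A E_sym by auto
  next
    case False
    then have vA: "v \<in> A" "v \<notin> fst ` S"
      using in_switch(1) by (auto simp: switch_def)
    show ?thesis
    proof (cases "\<exists>p\<in>S. E v (snd p)")
      case True
      then obtain y z where yz: "(y, z) \<in> S" "E v z"
        by force
      have lonely: "\<forall>x\<in>A. \<not> E v x"
      proof (intro ballI notI)
        fix x assume "x \<in> A" "E v x"
        then have "(v, z) \<in> J"
          using Y_if_A_neighbour vA(1) yz SJ by (auto simp: Jset_def)
        then have "v = y"
          using Jset_snd_unique yz(1) SJ by blast
        then show False
          using vA(2) yz(1) by force
      qed
      then have "u \<in> snd ` S" "w \<in> snd ` S"
        using in_switch(2,3) adj by (auto simp: switch_def)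
      then show ?thesis
        using lonely_vertex_sees_one_Z_end[OF S _ _ vA(1) lonely] adj by force
    next
      case False
      then have "u \<in> A" "w \<in> A"
        using in_switch(2,3) adj by (auto simp: switch_def)
      then show ?thesis
        using A_neighbour_unique vA(1) adj by blast
    qed
  qed
qed

lemma switch_AI_set:
  assumes "independent J (H_adj E) S"
  shows "AI_set V E (switch S)"
proof -
  have "S \<subseteq> J"
    using assms by (simp add: independent_def)
  then have sub: "switch S \<subseteq> V"
    using A_subset_V E_in_V by (auto simp: switch_def Jset_def)
  have "card {x\<in>switch S. E v x} \<le> Suc 0" if "v \<in> switch S" for v
    using switch_neighbour_unique[OF assms that] finite_subset[OF sub finite_V]
    by (subst card_le_Suc0_iff_eq) auto
  then show ?thesis
    using sub by (simp add: AI_set_def deg_in_def)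
qed

lemma card_switch_ge:
  assumes "S \<subseteq> J"
  shows "card A \<le> card (switch S)"
proof -
  have finite_S: "finite S"
    using assms E_in_V finite_subset[of S "V \<times> V"] finite_V by (auto simp: Jset_def)
  have "card (switch S) = card (A - fst ` S) + card (snd ` S)"
    unfolding switch_def using assms finite_A finite_S
    by (intro card_Un_disjoint) (auto simp: Jset_def Yset_def)
  also have "card (snd ` S) = card S"
    using inj_on_subset[OF inj_on_snd_Jset assms] by (rule card_image)
  also have "card (A - fst ` S) = card A - card (fst ` S)"
    using assms Y_subset_A finite_S by (intro card_Diff_subset) (auto simp: Jset_def)
  finally show ?thesis
    using card_image_le[OF finite_S, of fst] by linarith
qed

lemma switch_MAI_set:
  assumes S: "independent J (H_adj E) S"
  shows "MAI_set V E (switch S)"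
proof -
  have SJ: "S \<subseteq> J"
    using S by (simp add: independent_def)
  have "\<forall>x\<in>fst ` S. \<forall>y\<in>fst ` S. \<not> E x y"
    using H_independentD(1)[OF S] by blast
  then obtain I where "I \<subseteq> A - fst ` S" "independent V E I" "card I = alpha V E"
    using maximum_independent_avoiding[of "fst ` S"] SJ by (force simp: Jset_def)
  then have "AI_alpha V E (switch S)"
    using switch_AI_set[OF S] by (auto simp: AI_alpha_def switch_def)
  then show ?thesis
    using MAI card_switch_ge[OF SJ] by (auto simp: MAI_set_def)
qed

lemma inj_on_switch: "inj_on switch {S. independent J (H_adj E) S}"
proof (rule inj_onI)
  fix S1 S2
  assume S: "S1 \<in> {S. independent J (H_adj E) S}" "S2 \<in> {S. independent J (H_adj E) S}"
    and eq: "switch S1 = switch S2"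
  then have SJ: "S1 \<subseteq> J" "S2 \<subseteq> J"
    by (simp_all add: independent_def)
  then have "snd ` S = switch S - A" if "S \<in> {S1, S2}" for S
    using that by (auto simp: switch_def Jset_def Yset_def)
  then have "snd ` S1 = snd ` S2"
    using eq by simp
  then show "S1 = S2"
    using inj_on_image_eq_iff[OF inj_on_snd_Jset SJ] by blast
qed

end

theorem lemma9:
  fixes n :: nat and E :: "nat \<Rightarrow> nat \<Rightarrow> bool" and A :: "nat set"
  assumes "simple_graph {1..n} E"
    and "cubic {1..n} E"
    and "girth_at_least {1..n} E 16"
    and "MAI_set {1..n} E A"
  shows "card {A'. MAI_set {1..n} E A'} \<ge> num_indep (Jset {1..n} E A) (H_adj E)"
proof -
  interpret subcubic_triangle_free_MAI "{1..n}" E A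
    using assms girth_at_least_triangle_free[OF assms(1,3)]
    by unfold_locales (auto simp: cubic_def)
  have "switch ` {S. independent J (H_adj E) S} \<subseteq> {A'. MAI_set {1..n} E A'}"
    using switch_MAI_set by blast
  then show ?thesis
    unfolding num_indep_def
    using card_inj_on_le[OF inj_on_switch] finite_MAI_sets[of "{1..n}" E] by simp
qed

end
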